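(* Let $f\in H^1_\mathscr{D}(\mathbb{R}^d)$. Then $$\|f\|_{H^1_\mathscr{D}}\eqsim \sup_{\mathcal{S}\text{ sparse}}\|\mathcal{M}_\mathcal{S}f\|_{L^1(\mathbb{R}^d)}\eqsim \sup_{\mathcal{S}\text{ sparse}}\|\mathcal{A}_\mathcal{S}f\|_{L^1(\mathbb{R}^d)},$$ where the suprema run over all sparse families $\mathcal{S}\subset\mathscr{D}$ and the implicit constants are independent of $f$.
   Context: $\mathscr{D}$ is the standard dyadic grid on $\mathbb{R}^d$, $\langle f\rangle_Q=\frac1{|Q|}\int_Qf$, $\mathcal{M}_\mathscr{D}f(x)=\sup_{x\in Q\in\mathscr{D}}|\langle f\rangle_Q|$, and $H^1_\mathscr{D}(\mathbb{R}^d)$ is the space of locally integrable $f$ with $\|f\|_{H^1_\mathscr{D}}:=\|\mathcal{M}_\mathscr{D}f\|_{L^1}<\infty$. A family $\mathcal{S}\subset\mathscr{D}$ is sparse if for every $Q\in\mathcal{S}$, $|Q\setminus\bigcup_{R\in\mathcal{S},R\subsetneq Q}R|\ge\frac12|Q|$. For such $\mathcal{S}$, $\mathcal{M}_\mathcal{S}f(x)=\sup_{Q\in\mathcal{S}}|\langle f\rangle_Q|\mathbf{1}_Q(x)$ and $\mathcal{A}_\mathcal{S}f(x)=\sum_{Q\in\mathcal{S}}|\langle f\rangle_Q|\mathbf{1}_Q(x)$. *)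

theory Defs
  imports "HOL-Analysis.Analysis"
begin

definition dcube :: "int \<Rightarrow> ('n::finite \<Rightarrow> int) \<Rightarrow> (real^'n) set" where
  "dcube j k = {x. \<forall>i. real_of_int (k i) * 2 powr (real_of_int j) \<le> x $ i
                      \<and> x $ i < (real_of_int (k i) + 1) * 2 powr (real_of_int j)}"

definition dyadic_grid :: "(real^'n::finite) set set" where
  "dyadic_grid = {dcube j k | j k. True}"

definition loc_integrable :: "(real^'n::finite \<Rightarrow> real) \<Rightarrow> bool" where
  "loc_integrable f \<longleftrightarrow> (\<forall>K. compact K \<longrightarrow> set_integrable lborel K f)"

definition avg :: "(real^'n::finite \<Rightarrow> real) \<Rightarrow> (real^'n) set \<Rightarrow> real" where
  "avg f Q = (LINT x:Q|lborel. f x) / measure lborel Q"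

definition dyadic_max :: "(real^'n::finite \<Rightarrow> real) \<Rightarrow> real^'n \<Rightarrow> ennreal" where
  "dyadic_max f x = (SUP Q\<in>{Q\<in>dyadic_grid. x \<in> Q}. ennreal \<bar>avg f Q\<bar>)"

definition H1_norm :: "(real^'n::finite \<Rightarrow> real) \<Rightarrow> ennreal" where
  "H1_norm f = (\<integral>\<^sup>+ x. dyadic_max f x \<partial>lborel)"

definition sparse :: "(real^'n::finite) set set \<Rightarrow> bool" where
  "sparse S \<longleftrightarrow> S \<subseteq> dyadic_grid \<and>
     (\<forall>Q\<in>S. measure lborel (Q - \<Union>{R\<in>S. R \<subset> Q}) \<ge> measure lborel Q / 2)"

definition sparse_max :: "(real^'n::finite) set set \<Rightarrow> (real^'n \<Rightarrow> real) \<Rightarrow> real^'n \<Rightarrow> ennreal" where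
  "sparse_max S f x = (SUP Q\<in>S. ennreal \<bar>avg f Q\<bar> * indicator Q x)"

text \<open>Sparse operator: the (unordered, nonnegative) sum over S, i.e. the supremum of finite partial sums.\<close>
definition sparse_op :: "(real^'n::finite) set set \<Rightarrow> (real^'n \<Rightarrow> real) \<Rightarrow> real^'n \<Rightarrow> ennreal" where
  "sparse_op S f x = (SUP F\<in>{F. finite F \<and> F \<subseteq> S}. \<Sum>Q\<in>F. ennreal \<bar>avg f Q\<bar> * indicator Q x)"

definition sup_sparse_max :: "(real^'n::finite \<Rightarrow> real) \<Rightarrow> ennreal" where
  "sup_sparse_max f = (SUP S\<in>{S. sparse S}. \<integral>\<^sup>+ x. sparse_max S f x \<partial>lborel)"

definition sup_sparse_op :: "(real^'n::finite \<Rightarrow> real) \<Rightarrow> ennreal" where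
  "sup_sparse_op f = (SUP S\<in>{S. sparse S}. \<integral>\<^sup>+ x. sparse_op S f x \<partial>lborel)"

end

theory Submission
  imports Defs
begin

(* Put a Q = |<f>_Q|, so that M_D f = sup_Q a Q 1_Q, and slice M_D f at the heights 4^k: with
   E_k = {M_D f > 4^k}, the integral of M_D f is comparable to the sum of 4^k |E_k|.  Since
   |E_k| < \<infinity>, each E_k is the disjoint union of the maximal dyadic cubes Q with a Q > 4^k.
   Call such a cube good if at most half of it lies in E_(k+1).  The bad cubes are at least half
   covered by E_(k+1), so |E_k| <= |good cubes of level k| + 2 |E_(k+1)|, and because 2 < 4 the
   last term is absorbed: the sum of 4^k |E_k| is at most twice the sum of 4^k |good cubes of
   level k|.  The good cubes of all levels form a sparse family S, because the cubes of S strictly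
   inside a good cube of level k lie in E_(k+1); and M_S f > 4^k on the good cubes of level k.
   Conversely M_S f <= M_D f, and for sparse S the parts E_Q of Q not covered by smaller cubes of
   S are disjoint with |Q| <= 2 |E_Q|, whence the L^1 norm of A_S f is at most 2 ||M_S f||_1. *)

lemma mem_dcube:
  "x \<in> dcube j k \<longleftrightarrow>
     (\<forall>i. real_of_int (k i) * 2 powr real_of_int j \<le> x $ i \<and> x $ i < (real_of_int (k i) + 1) * 2 powr real_of_int j)"
  by (simp add: dcube_def)

lemma dyadic_interval_nest:
  fixes x z :: real and j j' k k' :: int
  assumes "j \<le> j'"
    and x: "k * 2 powr j \<le> x" "x < (real_of_int k + 1) * 2 powr j"
    and x': "k' * 2 powr j' \<le> x" "x < (real_of_int k' + 1) * 2 powr j'"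
    and z: "k * 2 powr j \<le> z" "z < (real_of_int k + 1) * 2 powr j"
  shows "k' * 2 powr j' \<le> z \<and> z < (real_of_int k' + 1) * 2 powr j'"
proof -
  define p :: real where "p = 2 powr j"
  define N :: int where "N = 2 ^ nat (j' - j)"
  have "p > 0" by (simp add: p_def)
  have pN: "2 powr j' = p * N"
    using \<open>j \<le> j'\<close> by (simp add: p_def N_def powr_realpow[symmetric] powr_add[symmetric])
  have "k = \<lfloor>x / p\<rfloor>"
    using x \<open>p > 0\<close> by (intro floor_unique[symmetric]) (simp_all add: p_def field_simps)
  moreover have "k' * N \<le> x / p" "x / p < (k' + 1) * N"
    using x' \<open>p > 0\<close> by (simp_all add: pN field_simps)
  ultimately have "k' * N \<le> k" "k < (k' + 1) * N"
    by (simp_all add: le_floor_iff floor_less_iff)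
  then have "k' * N \<le> k" "k + 1 \<le> (k' + 1) * N"
    by simp_all
  then have le: "real_of_int k' * N \<le> k" "real_of_int k + 1 \<le> (k' + 1) * N"
    by (metis of_int_le_iff of_int_mult, metis of_int_le_iff of_int_mult of_int_add of_int_1)
  have "k' * 2 powr j' = (k' * N) * p" by (simp add: pN)
  also have "\<dots> \<le> k * p" using le \<open>p > 0\<close> by (simp add: mult_right_mono)
  also have "\<dots> \<le> z" using z by (simp add: p_def)
  finally have "k' * 2 powr j' \<le> z" .
  have "z < (k + 1) * p" using z by (simp add: p_def)
  also have "\<dots> \<le> ((k' + 1) * N) * p" using le \<open>p > 0\<close> by (simp add: mult_right_mono)
  also have "\<dots> = (k' + 1) * 2 powr j'" by (simp add: pN)
  finally show ?thesis using \<open>k' * 2 powr j' \<le> z\<close> by simp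
qed

lemma dcube_nest:
  assumes "x \<in> dcube j k" "x \<in> dcube j' k'" "j \<le> j'"
  shows "dcube j k \<subseteq> dcube j' k'"
proof
  fix z assume "z \<in> dcube j k"
  then show "z \<in> dcube j' k'"
    using assms dyadic_interval_nest[OF \<open>j \<le> j'\<close>] unfolding mem_dcube by meson
qed

lemma dcube_corner_mem: "(\<chi> i. real_of_int (k i) * 2 powr real_of_int j) \<in> dcube j k"
  by (simp add: mem_dcube)

lemma sets_dcube [measurable, simp]: "dcube j k \<in> sets borel"
  unfolding dcube_def by measurable

lemma emeasure_dcube:
  "emeasure lborel (dcube j (k :: 'n::finite \<Rightarrow> int)) = ennreal ((2 powr real_of_int j) ^ CARD('n))"
proof -
  define a :: "real^'n" where "a = (\<chi> i. real_of_int (k i) * 2 powr real_of_int j)"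
  define b :: "real^'n" where "b = (\<chi> i. (real_of_int (k i) + 1) * 2 powr real_of_int j)"
  have "cbox a b \<noteq> {}"
    by (auto simp: a_def b_def box_ne_empty inner_axis Basis_vec_def)
  then have "measure lborel (cbox a b) = (\<Prod>i\<in>UNIV. b $ i - a $ i)"
    by (rule content_cbox_cart)
  also have "\<dots> = (2 powr real_of_int j) ^ CARD('n)"
    by (simp add: a_def b_def algebra_simps)
  finally have cbox: "emeasure lborel (cbox a b) = ennreal ((2 powr real_of_int j) ^ CARD('n))"
    using emeasure_lborel_cbox_finite[of a b] by (simp add: emeasure_eq_ennreal_measure)
  have "box a b \<subseteq> dcube j k" "dcube j k \<subseteq> cbox a b"
    by (auto simp: a_def b_def mem_box_cart mem_dcube less_imp_le)
  then have "emeasure lborel (box a b) \<le> emeasure lborel (dcube j k)"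
    "emeasure lborel (dcube j k) \<le> emeasure lborel (cbox a b)"
    by (auto intro!: emeasure_mono)
  moreover have "emeasure lborel (box a b) = emeasure lborel (cbox a b)"
    by (simp add: emeasure_lborel_box_eq emeasure_lborel_cbox_eq)
  ultimately show ?thesis using cbox by simp
qed

lemma dcube_level_le_of_subset:
  assumes "dcube j k \<subseteq> dcube j' (k' :: 'n::finite \<Rightarrow> int)"
  shows "j \<le> j'"
proof -
  have "emeasure lborel (dcube j k) \<le> emeasure lborel (dcube j' k')"
    using assms by (intro emeasure_mono) auto
  then have "(2 powr real_of_int j) ^ CARD('n) \<le> (2 powr real_of_int j') ^ CARD('n)"
    by (simp add: emeasure_dcube)
  then show ?thesis by (subst (asm) power_mono_iff) auto
qed

lemma dcube_eq_of_same_level: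
  assumes "x \<in> dcube j k" "x \<in> dcube j k'"
  shows "dcube j k = dcube j k'"
  using dcube_nest[OF assms] dcube_nest[OF assms(2,1)] by auto

lemma sets_dyadic_grid [measurable]: "Q \<in> dyadic_grid \<Longrightarrow> Q \<in> sets borel"
  by (auto simp: dyadic_grid_def)

lemma emeasure_dyadic_grid_finite: "Q \<in> dyadic_grid \<Longrightarrow> emeasure lborel Q < \<infinity>"
  by (auto simp: dyadic_grid_def emeasure_dcube)

lemma countable_dyadic_grid: "countable (dyadic_grid :: (real^'n::finite) set set)"
proof -
  have "countable (UNIV :: ('n \<Rightarrow> int) set)"
    using countable_PiE[of UNIV "\<lambda>_. UNIV :: int set"] by simp
  then have "countable ((UNIV :: int set) \<times> (UNIV :: ('n \<Rightarrow> int) set))"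
    by (intro countable_SIGMA) (auto intro: countableI_type)
  moreover have "(dyadic_grid :: (real^'n) set set) = (\<lambda>(j, k). dcube j k) ` (UNIV \<times> UNIV)"
    by (auto simp: dyadic_grid_def)
  ultimately show ?thesis by (metis countable_image)
qed

lemma sets_Union_dyadic_grid: "C \<subseteq> dyadic_grid \<Longrightarrow> \<Union>C \<in> sets lborel"
  using countable_dyadic_grid
  by (intro sets.countable_Union) (auto intro: countable_subset sets_dyadic_grid)

lemma dyadic_grid_nested:
  assumes "Q \<in> dyadic_grid" "R \<in> dyadic_grid" "x \<in> Q" "x \<in> R"
  shows "Q \<subseteq> R \<or> R \<subseteq> Q"
proof -
  obtain j k j' k' where "Q = dcube j k" "R = dcube j' k'"
    using assms by (auto simp: dyadic_grid_def)
  with assms show ?thesis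
    using dcube_nest[of x j k j' k'] dcube_nest[of x j' k' j k] by (cases "j \<le> j'") auto
qed

lemma dcube_level_le_log:
  assumes "emeasure lborel (dcube j (k :: 'n::finite \<Rightarrow> int)) \<le> ennreal B"
  shows "real_of_int j \<le> log 2 (max 1 B)"
proof (cases "j \<le> 0")
  case True
  have "0 \<le> log 2 (max 1 B)" by simp
  with True show ?thesis by linarith
next
  case False
  then have "1 \<le> 2 powr real_of_int j" by (intro ge_one_powr_ge_zero) simp_all
  then have "2 powr real_of_int j \<le> (2 powr real_of_int j) ^ CARD('n)"
    using power_increasing[of 1 "CARD('n)" "2 powr real_of_int j"] by simp
  also have "\<dots> \<le> B"
  proof -
    have "0 < (2 powr real_of_int j) ^ CARD('n)" by simp
    with assms show ?thesis by (auto simp: emeasure_dcube ennreal_le_iff2)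
  qed
  finally have "2 powr real_of_int j \<le> max 1 B" by simp
  then show ?thesis by (simp add: le_log_iff)
qed

lemma dyadic_grid_maximal_cube:
  assumes "Q \<in> C" "C \<subseteq> (dyadic_grid :: (real^'n::finite) set set)"
    and bounded: "\<And>R. R \<in> C \<Longrightarrow> emeasure lborel R \<le> ennreal B"
  shows "\<exists>R\<in>C. Q \<subseteq> R \<and> (\<forall>R'\<in>C. R \<subseteq> R' \<longrightarrow> R' = R)"
proof -
  obtain j0 k0 where Q: "Q = dcube j0 k0"
    using assms by (auto simp: dyadic_grid_def)
  define L where "L = {j. \<exists>k. dcube j k \<in> C \<and> Q \<subseteq> dcube j k}"
  have "L \<subseteq> {j0..\<lfloor>log 2 (max 1 B)\<rfloor>}"
  proof
    fix j assume "j \<in> L"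
    then obtain k where "dcube j k \<in> C" "Q \<subseteq> dcube j k"
      by (auto simp: L_def)
    then have "j0 \<le> j" "real_of_int j \<le> log 2 (max 1 B)"
      using Q bounded by (auto intro: dcube_level_le_of_subset dcube_level_le_log)
    then show "j \<in> {j0..\<lfloor>log 2 (max 1 B)\<rfloor>}"
      by (simp add: le_floor_iff)
  qed
  then have "finite L"
    by (rule finite_subset) simp
  moreover have "j0 \<in> L"
    using assms Q by (auto simp: L_def)
  ultimately have "Max L \<in> L" "\<And>j. j \<in> L \<Longrightarrow> j \<le> Max L"
    by (auto intro: Max_in)
  then obtain k where R: "dcube (Max L) k \<in> C" "Q \<subseteq> dcube (Max L) k"
    by (auto simp: L_def)
  have "R' = dcube (Max L) k" if R'C: "R' \<in> C" and sub: "dcube (Max L) k \<subseteq> R'" for R'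
  proof -
    obtain j' k' where R': "R' = dcube j' k'"
      using R'C assms(2) by (auto simp: dyadic_grid_def)
    have "j' \<le> Max L"
      using \<open>\<And>j. j \<in> L \<Longrightarrow> j \<le> Max L\<close> R'C sub R R' by (auto simp: L_def)
    moreover have "Max L \<le> j'"
      using sub R' by (auto intro: dcube_level_le_of_subset)
    ultimately show ?thesis
      using R' sub dcube_corner_mem dcube_eq_of_same_level by (metis antisym subsetD)
  qed
  with R show ?thesis by blast
qed

definition four_pow :: "int \<Rightarrow> ennreal" where
  "four_pow k = ennreal (4 powr real_of_int k)"

definition layer_sum :: "ennreal \<Rightarrow> ennreal" where
  "layer_sum s = (\<integral>\<^sup>+k. four_pow k * indicator {k. four_pow k < s} k \<partial>count_space UNIV)"

lemma four_pow_Suc: "four_pow (k + 1) = 4 * four_pow k"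
  by (simp add: four_pow_def powr_add ennreal_mult' mult.commute)

lemma four_pow_mono: "k \<le> k' \<Longrightarrow> four_pow k \<le> four_pow k'"
  by (simp add: four_pow_def)

lemma four_pow_pos: "four_pow k > 0"
  by (simp add: four_pow_def)

lemma four_pow_less_iff: "0 < r \<Longrightarrow> four_pow k < ennreal r \<longleftrightarrow> k < \<lceil>log 4 r\<rceil>"
  by (simp add: four_pow_def ennreal_less_iff powr_less_iff less_ceiling_iff)

lemma four_pow_unbounded:
  assumes "\<And>k. four_pow k \<le> x"
  shows "x = \<infinity>"
proof (cases x)
  case (real y)
  obtain n where "y < 4 ^ n"
    using real_arch_pow[of 4 y] by auto
  then have "ennreal y < four_pow (int n)"
    by (simp add: four_pow_def powr_realpow ennreal_lessI)
  with assms[of "int n"] real show ?thesis by simp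
qed simp

lemma geometric_four_pow_sum:
  "3 * (\<integral>\<^sup>+k. four_pow k * indicator {..K} k \<partial>count_space UNIV) = four_pow (K + 1)"
proof -
  have "bij_betw (\<lambda>n::nat. K - int n) UNIV {..K}"
    by (rule bij_betwI[where g = "\<lambda>k. nat (K - k)"]) auto
  then have "(\<integral>\<^sup>+n. four_pow (K - int n) \<partial>count_space UNIV) = (\<integral>\<^sup>+k. four_pow k \<partial>count_space {..K})"
    by (rule nn_integral_bij_count_space)
  then have "(\<integral>\<^sup>+k. four_pow k * indicator {..K} k \<partial>count_space UNIV)
      = (\<integral>\<^sup>+n. four_pow (K - int n) \<partial>count_space UNIV)"
    by (simp add: nn_integral_count_space_indicator)
  also have "\<dots> = (\<Sum>n. ennreal (4 powr real_of_int K * (1 / 4) ^ n))"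
  proof -
    have "(4::real) powr real_of_int (K - int n) = 4 powr real_of_int K / 4 ^ n" for n
      by (simp add: powr_diff powr_realpow[symmetric])
    then have "(4::real) powr real_of_int (K - int n) = 4 powr real_of_int K * (1 / 4) ^ n" for n
      by (simp add: power_one_over)
    then show ?thesis
      by (simp add: nn_integral_count_space_nat four_pow_def)
  qed
  also have "\<dots> = ennreal (4 powr real_of_int K * (4 / 3))"
    using geometric_sums[of "1 / 4 :: real"]
    by (intro suminf_ennreal_eq sums_mult) simp_all
  finally have "3 * (\<integral>\<^sup>+k. four_pow k * indicator {..K} k \<partial>count_space UNIV)
      = ennreal (3 * (4 powr real_of_int K * (4 / 3)))"
    by (simp add: numeral_mult_ennreal)
  also have "3 * (4 powr real_of_int K * (4 / 3)) = (4::real) powr real_of_int (K + 1)"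
    by (simp add: powr_add)
  finally show ?thesis
    by (simp only: four_pow_def)
qed

lemma four_pow_le_layer_sum:
  assumes "four_pow K < s"
  shows "four_pow (K + 1) \<le> 3 * layer_sum s"
proof -
  have "(\<integral>\<^sup>+k. four_pow k * indicator {..K} k \<partial>count_space UNIV) \<le> layer_sum s"
    unfolding layer_sum_def using assms four_pow_mono
    by (intro nn_integral_mono) (auto simp: indicator_def intro: le_less_trans)
  then have "3 * (\<integral>\<^sup>+k. four_pow k * indicator {..K} k \<partial>count_space UNIV) \<le> 3 * layer_sum s"
    by (rule mult_left_mono) simp
  then show ?thesis
    by (simp only: geometric_four_pow_sum)
qed

lemma le_layer_sum: "s \<le> 3 * layer_sum s"
proof (cases s)
  case (real r)
  show ?thesis
  proof (cases "r > 0")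
    case True
    define K where "K = \<lceil>log 4 r\<rceil> - 1"
    have "four_pow K < s" "\<not> four_pow (K + 1) < s"
      using four_pow_less_iff[OF True] by (simp_all add: real K_def)
    then show ?thesis
      using four_pow_le_layer_sum by (meson not_less order_trans)
  qed (use real in simp)
next
  case top
  then have "four_pow (k - 1 + 1) \<le> 3 * layer_sum s" for k
    by (intro four_pow_le_layer_sum) (simp add: four_pow_def)
  then have "3 * layer_sum s = \<infinity>"
    by (intro four_pow_unbounded) simp
  with top show ?thesis by simp
qed

lemma layer_sum_le: "3 * layer_sum s \<le> 4 * s"
proof (cases s)
  case (real r)
  show ?thesis
  proof (cases "r > 0")
    case True
    define K where "K = \<lceil>log 4 r\<rceil> - 1"
    have less_iff: "four_pow k < s \<longleftrightarrow> k \<le> K" for k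
      unfolding real four_pow_less_iff[OF True] K_def by linarith
    then have "{k. four_pow k < s} = {..K}"
      by auto
    then have "3 * layer_sum s = 4 * four_pow K"
      by (simp add: layer_sum_def geometric_four_pow_sum four_pow_Suc)
    also have "\<dots> \<le> 4 * s"
      using less_iff[of K] by (intro mult_left_mono) simp_all
    finally show ?thesis .
  qed (use real in \<open>simp add: layer_sum_def\<close>)
qed (simp add: ennreal_mult_top)

lemma nn_integral_four_pow_shift:
  "4 * (\<integral>\<^sup>+k. four_pow k * e (k + 1) \<partial>count_space UNIV) = (\<integral>\<^sup>+k. four_pow k * e k \<partial>count_space UNIV)"
proof -
  have "4 * (\<integral>\<^sup>+k. four_pow k * e (k + 1) \<partial>count_space UNIV)
      = (\<integral>\<^sup>+k. four_pow (k + 1) * e (k + 1) \<partial>count_space UNIV)"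
    by (subst nn_integral_cmult[symmetric]) (simp_all add: four_pow_Suc mult.assoc)
  also have "\<dots> = (\<integral>\<^sup>+k. four_pow k * e k \<partial>count_space UNIV)"
    by (rule nn_integral_bij_count_space[where g = "\<lambda>k. k + 1"])
       (rule bij_betwI[where g = "\<lambda>k. k - 1"], auto)
  finally show ?thesis .
qed

lemma emeasure_le_twice_of_measure_le:
  assumes "A \<subseteq> Q" "A \<in> sets M" "Q \<in> sets M" "emeasure M Q < \<infinity>"
    and "measure M Q \<le> 2 * measure M A"
  shows "emeasure M Q \<le> 2 * emeasure M A"
proof -
  have "emeasure M A < \<infinity>"
    using assms(1,3,4) emeasure_mono[of A Q M] by (simp add: le_less_trans)
  then have "emeasure M A = ennreal (measure M A)"
    by (simp add: emeasure_eq_ennreal_measure)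
  moreover have "emeasure M Q = ennreal (measure M Q)"
    using assms(4) by (simp add: emeasure_eq_ennreal_measure)
  ultimately show ?thesis
    using assms(5) by (simp add: ennreal_leI numeral_mult_ennreal)
qed

lemma nn_integral_weighted_emeasure:
  fixes w :: "'i \<Rightarrow> ennreal"
  assumes "countable I" "\<And>i. i \<in> I \<Longrightarrow> A i \<in> sets M"
  shows "(\<integral>\<^sup>+i. w i * emeasure M (A i) \<partial>count_space I)
    = (\<integral>\<^sup>+x. (\<integral>\<^sup>+i. w i * indicator (A i) x \<partial>count_space I) \<partial>M)"
  using assms
  by (subst nn_integral_count_space_nn_integral)
     (auto intro!: nn_integral_cong simp: nn_integral_cmult_indicator)

definition grid_max :: "((real^'n::finite) set \<Rightarrow> ennreal) \<Rightarrow> (real^'n) set set \<Rightarrow> real^'n \<Rightarrow> ennreal" where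
  "grid_max a S x = (SUP Q\<in>S. a Q * indicator Q x)"

lemma grid_max_ge: "Q \<in> S \<Longrightarrow> x \<in> Q \<Longrightarrow> a Q \<le> grid_max a S x"
  unfolding grid_max_def by (rule SUP_upper2[of Q]) auto

lemma grid_max_mono: "S \<subseteq> T \<Longrightarrow> grid_max a S x \<le> grid_max a T x"
  unfolding grid_max_def by (rule SUP_subset_mono) auto

lemma borel_measurable_grid_max [measurable]:
  "S \<subseteq> dyadic_grid \<Longrightarrow> grid_max a S \<in> borel_measurable lborel"
  unfolding grid_max_def
  by (rule borel_measurable_SUP) (auto intro: countable_subset[OF _ countable_dyadic_grid])

definition heavy_cubes :: "((real^'n::finite) set \<Rightarrow> ennreal) \<Rightarrow> int \<Rightarrow> (real^'n) set set" where
  "heavy_cubes a k = {Q \<in> dyadic_grid. four_pow k < a Q}"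

definition level_set :: "((real^'n::finite) set \<Rightarrow> ennreal) \<Rightarrow> int \<Rightarrow> (real^'n) set" where
  "level_set a k = {x. four_pow k < grid_max a dyadic_grid x}"

lemma level_set_eq_Union_heavy_cubes: "level_set a k = \<Union>(heavy_cubes a k)"
  by (auto simp: level_set_def heavy_cubes_def grid_max_def less_SUP_iff indicator_def)

lemma sets_level_set [measurable, simp]: "level_set a k \<in> sets borel"
  using sets_Union_dyadic_grid[of "heavy_cubes a k"]
  by (simp add: level_set_eq_Union_heavy_cubes heavy_cubes_def)

lemma emeasure_level_set_finite:
  assumes "(\<integral>\<^sup>+x. grid_max a dyadic_grid x \<partial>lborel) < \<infinity>"
  shows "emeasure lborel (level_set a k) < \<infinity>"
proof -
  have "four_pow k * emeasure lborel (level_set a k) = (\<integral>\<^sup>+x. four_pow k * indicator (level_set a k) x \<partial>lborel)"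
    by (rule nn_integral_cmult_indicator[symmetric]) simp
  also have "\<dots> \<le> (\<integral>\<^sup>+x. grid_max a dyadic_grid x \<partial>lborel)"
    by (intro nn_integral_mono) (auto simp: indicator_def level_set_def less_imp_le)
  finally have "four_pow k * emeasure lborel (level_set a k) < \<infinity>"
    using assms by (rule le_less_trans)
  then show ?thesis
    using four_pow_pos[of k] by (auto simp: ennreal_mult_less_top)
qed

definition stopping_cubes :: "((real^'n::finite) set \<Rightarrow> ennreal) \<Rightarrow> int \<Rightarrow> (real^'n) set set" where
  "stopping_cubes a k = {Q \<in> heavy_cubes a k. \<forall>R\<in>heavy_cubes a k. Q \<subseteq> R \<longrightarrow> R = Q}"

lemma stopping_cubes_subset: "stopping_cubes a k \<subseteq> dyadic_grid"
  by (auto simp: stopping_cubes_def heavy_cubes_def)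

lemma level_set_eq_Union_stopping_cubes:
  assumes "(\<integral>\<^sup>+x. grid_max a dyadic_grid x \<partial>lborel) < \<infinity>"
  shows "level_set a k = \<Union>(stopping_cubes a k)"
proof
  obtain B where B: "emeasure lborel (level_set a k) = ennreal B"
    using emeasure_level_set_finite[OF assms, of k] by (cases "emeasure lborel (level_set a k)") auto
  have bounded: "emeasure lborel R \<le> ennreal B" if "R \<in> heavy_cubes a k" for R
  proof -
    have "R \<subseteq> level_set a k"
      using that by (auto simp: level_set_eq_Union_heavy_cubes)
    then show ?thesis
      using B emeasure_mono[of R "level_set a k" lborel] by simp
  qed
  have "\<exists>R\<in>stopping_cubes a k. Q \<subseteq> R" if "Q \<in> heavy_cubes a k" for Q
  proof -
    have "heavy_cubes a k \<subseteq> dyadic_grid"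
      by (auto simp: heavy_cubes_def)
    from dyadic_grid_maximal_cube[OF that this bounded] show ?thesis
      by (auto simp: stopping_cubes_def)
  qed
  then show "level_set a k \<subseteq> \<Union>(stopping_cubes a k)"
    unfolding level_set_eq_Union_heavy_cubes by blast
  show "\<Union>(stopping_cubes a k) \<subseteq> level_set a k"
    unfolding level_set_eq_Union_heavy_cubes stopping_cubes_def by blast
qed

lemma stopping_cubes_disjoint:
  assumes "Q \<in> stopping_cubes a k" "R \<in> stopping_cubes a k" "Q \<noteq> R"
  shows "Q \<inter> R = {}"
proof (rule ccontr)
  assume "Q \<inter> R \<noteq> {}"
  then have "Q \<subseteq> R \<or> R \<subseteq> Q"
    using assms stopping_cubes_subset dyadic_grid_nested by blast
  with assms show False
    by (auto simp: stopping_cubes_def)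
qed

definition good_cubes :: "((real^'n::finite) set \<Rightarrow> ennreal) \<Rightarrow> int \<Rightarrow> (real^'n) set set" where
  "good_cubes a k =
    {Q \<in> stopping_cubes a k. measure lborel (Q \<inter> level_set a (k + 1)) \<le> measure lborel Q / 2}"

lemma good_cubes_subset: "good_cubes a k \<subseteq> dyadic_grid"
  using stopping_cubes_subset by (auto simp: good_cubes_def)

lemma emeasure_Union_bad_cubes_le:
  "emeasure lborel (\<Union>(stopping_cubes a k - good_cubes a k)) \<le> 2 * emeasure lborel (level_set a (k + 1))"
proof -
  define B where "B = stopping_cubes a k - good_cubes a k"
  define E where "E = level_set a (k + 1)"
  have B: "B \<subseteq> dyadic_grid" "countable B"
    using stopping_cubes_subset countable_dyadic_grid by (auto simp: B_def intro: countable_subset)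
  have disj: "disjoint_family_on (\<lambda>Q. Q) B" "disjoint_family_on (\<lambda>Q. Q \<inter> E) B"
    using stopping_cubes_disjoint unfolding B_def disjoint_family_on_def by blast+
  have "emeasure lborel (\<Union>B) = emeasure lborel (\<Union>((\<lambda>Q. Q) ` B))"
    by simp
  also have "\<dots> = (\<integral>\<^sup>+Q. emeasure lborel Q \<partial>count_space B)"
    by (rule emeasure_UN_countable[OF _ B(2) disj(1)]) (use B(1) in \<open>auto intro: sets_dyadic_grid\<close>)
  also have "\<dots> \<le> (\<integral>\<^sup>+Q. 2 * emeasure lborel (Q \<inter> E) \<partial>count_space B)"
  proof (rule nn_integral_mono)
    fix Q assume "Q \<in> space (count_space B)"
    then have "Q \<in> dyadic_grid" "measure lborel Q \<le> 2 * measure lborel (Q \<inter> E)"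
      using B(1) by (auto simp: B_def good_cubes_def E_def)
    then show "emeasure lborel Q \<le> 2 * emeasure lborel (Q \<inter> E)"
      by (intro emeasure_le_twice_of_measure_le emeasure_dyadic_grid_finite) (auto simp: E_def)
  qed
  also have "\<dots> = 2 * emeasure lborel (\<Union>Q\<in>B. Q \<inter> E)"
    using emeasure_UN_countable[OF _ B(2) disj(2)] B(1)
    by (simp add: nn_integral_cmult E_def subset_eq)
  also have "\<dots> \<le> 2 * emeasure lborel E"
    by (intro mult_left_mono emeasure_mono) (auto simp: E_def)
  finally show ?thesis by (simp add: B_def E_def)
qed

lemma emeasure_level_set_le:
  assumes "(\<integral>\<^sup>+x. grid_max a dyadic_grid x \<partial>lborel) < \<infinity>"
  shows "emeasure lborel (level_set a k)
    \<le> emeasure lborel (\<Union>(good_cubes a k)) + 2 * emeasure lborel (level_set a (k + 1))"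
proof -
  have "level_set a k = \<Union>(good_cubes a k) \<union> \<Union>(stopping_cubes a k - good_cubes a k)"
    using level_set_eq_Union_stopping_cubes[OF assms] by (auto simp: good_cubes_def)
  also have "emeasure lborel \<dots>
      \<le> emeasure lborel (\<Union>(good_cubes a k)) + emeasure lborel (\<Union>(stopping_cubes a k - good_cubes a k))"
    using good_cubes_subset[of a k] stopping_cubes_subset[of a k]
    by (intro emeasure_subadditive sets_Union_dyadic_grid) auto
  also have "\<dots> \<le> emeasure lborel (\<Union>(good_cubes a k)) + 2 * emeasure lborel (level_set a (k + 1))"
    using emeasure_Union_bad_cubes_le by (rule add_left_mono)
  finally show ?thesis .
qed

definition level_sum :: "((real^'n::finite) set \<Rightarrow> ennreal) \<Rightarrow> ennreal" where
  "level_sum a = (\<integral>\<^sup>+k. four_pow k * emeasure lborel (level_set a k) \<partial>count_space UNIV)"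

definition good_sum :: "((real^'n::finite) set \<Rightarrow> ennreal) \<Rightarrow> ennreal" where
  "good_sum a = (\<integral>\<^sup>+k. four_pow k * emeasure lborel (\<Union>(good_cubes a k)) \<partial>count_space UNIV)"

lemma cmult_level_sum:
  "c * level_sum a = (\<integral>\<^sup>+x. c * layer_sum (grid_max a dyadic_grid x) \<partial>lborel)"
proof -
  have "c * level_sum a = (\<integral>\<^sup>+k. (c * four_pow k) * emeasure lborel (level_set a k) \<partial>count_space UNIV)"
    unfolding level_sum_def by (subst nn_integral_cmult[symmetric]) (simp_all add: mult.assoc)
  also have "\<dots> = (\<integral>\<^sup>+x. (\<integral>\<^sup>+k. (c * four_pow k) * indicator (level_set a k) x \<partial>count_space UNIV) \<partial>lborel)"
    by (rule nn_integral_weighted_emeasure) simp_all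
  also have "\<dots> = (\<integral>\<^sup>+x. c * layer_sum (grid_max a dyadic_grid x) \<partial>lborel)"
    unfolding layer_sum_def
    by (intro nn_integral_cong, subst nn_integral_cmult[symmetric])
       (simp_all add: mult.assoc indicator_def level_set_def)
  finally show ?thesis .
qed

lemma grid_max_integral_le_level_sum:
  "(\<integral>\<^sup>+x. grid_max a dyadic_grid x \<partial>lborel) \<le> 3 * level_sum a"
  unfolding cmult_level_sum by (intro nn_integral_mono le_layer_sum)

lemma level_sum_le_grid_max_integral:
  "3 * level_sum a \<le> 4 * (\<integral>\<^sup>+x. grid_max a dyadic_grid x \<partial>lborel)"
proof -
  have "3 * level_sum a \<le> (\<integral>\<^sup>+x. 4 * grid_max a dyadic_grid x \<partial>lborel)"
    unfolding cmult_level_sum by (intro nn_integral_mono layer_sum_le)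
  also have "\<dots> = 4 * (\<integral>\<^sup>+x. grid_max a dyadic_grid x \<partial>lborel)"
    by (rule nn_integral_cmult) simp
  finally show ?thesis .
qed

lemma level_sum_le_good_sum:
  assumes finite: "(\<integral>\<^sup>+x. grid_max a dyadic_grid x \<partial>lborel) < \<infinity>"
  shows "level_sum a \<le> 2 * good_sum a"
proof -
  define X where "X = (\<integral>\<^sup>+k. four_pow k * emeasure lborel (level_set a (k + 1)) \<partial>count_space UNIV)"
  have "four_pow k * emeasure lborel (level_set a k)
      \<le> four_pow k * emeasure lborel (\<Union>(good_cubes a k)) + 2 * (four_pow k * emeasure lborel (level_set a (k + 1)))"
    for k
    using mult_left_mono[OF emeasure_level_set_le[OF finite, of k], of "four_pow k"]
    by (simp add: distrib_left mult.left_commute)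
  then have "level_sum a \<le> good_sum a + 2 * X"
    unfolding level_sum_def good_sum_def X_def
    by (subst nn_integral_cmult[symmetric], simp, subst nn_integral_add[symmetric])
       (auto intro: nn_integral_mono)
  then have "2 * level_sum a \<le> 2 * (good_sum a + 2 * X)"
    by (rule mult_left_mono) simp
  also have "\<dots> = 2 * good_sum a + 4 * X"
    by (simp add: distrib_left mult.assoc[symmetric])
  also have "4 * X = level_sum a"
    unfolding X_def level_sum_def by (rule nn_integral_four_pow_shift)
  finally have "level_sum a + level_sum a \<le> level_sum a + 2 * good_sum a"
    by (simp add: mult_2 add.commute)
  moreover have "level_sum a < \<infinity>"
  proof -
    have "4 * (\<integral>\<^sup>+x. grid_max a dyadic_grid x \<partial>lborel) < \<infinity>"
      using finite by (simp add: ennreal_mult_less_top)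
    with level_sum_le_grid_max_integral have "3 * level_sum a < \<infinity>"
      by (rule le_less_trans)
    then show ?thesis by (auto simp: ennreal_mult_less_top)
  qed
  ultimately show ?thesis
    by (auto simp: ennreal_add_left_cancel_le)
qed

definition sparse_family :: "((real^'n::finite) set \<Rightarrow> ennreal) \<Rightarrow> (real^'n) set set" where
  "sparse_family a = (\<Union>k. good_cubes a k)"

lemma sparse_family_subset: "sparse_family a \<subseteq> dyadic_grid"
  using good_cubes_subset by (auto simp: sparse_family_def)

lemma four_pow_less_grid_max_sparse_family:
  assumes "x \<in> \<Union>(good_cubes a k)"
  shows "four_pow k < grid_max a (sparse_family a) x"
proof -
  obtain Q where Q: "Q \<in> good_cubes a k" "x \<in> Q"
    using assms by blast
  then have "four_pow k < a Q"
    by (auto simp: good_cubes_def stopping_cubes_def heavy_cubes_def)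
  also have "\<dots> \<le> grid_max a (sparse_family a) x"
    using Q by (intro grid_max_ge) (auto simp: sparse_family_def)
  finally show ?thesis .
qed

lemma good_sum_le:
  "3 * good_sum a \<le> 4 * (\<integral>\<^sup>+x. grid_max a (sparse_family a) x \<partial>lborel)"
proof -
  have sets: "\<Union>(good_cubes a k) \<in> sets lborel" for k
    using good_cubes_subset by (rule sets_Union_dyadic_grid)
  have "3 * good_sum a = (\<integral>\<^sup>+k. (3 * four_pow k) * emeasure lborel (\<Union>(good_cubes a k)) \<partial>count_space UNIV)"
    unfolding good_sum_def by (subst nn_integral_cmult[symmetric]) (simp_all add: mult.assoc)
  also have "\<dots> = (\<integral>\<^sup>+x. (\<integral>\<^sup>+k. (3 * four_pow k) * indicator (\<Union>(good_cubes a k)) x \<partial>count_space UNIV) \<partial>lborel)"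
    using sets by (intro nn_integral_weighted_emeasure) simp_all
  also have "\<dots> \<le> (\<integral>\<^sup>+x. 3 * layer_sum (grid_max a (sparse_family a) x) \<partial>lborel)"
  proof (rule nn_integral_mono)
    fix x
    have "(3 * four_pow k) * indicator (\<Union>(good_cubes a k)) x
        \<le> 3 * (four_pow k * indicator {k. four_pow k < grid_max a (sparse_family a) x} k)" for k
      using four_pow_less_grid_max_sparse_family[of x a k] by (auto simp: indicator_def mult.assoc)
    then show "(\<integral>\<^sup>+k. (3 * four_pow k) * indicator (\<Union>(good_cubes a k)) x \<partial>count_space UNIV)
        \<le> 3 * layer_sum (grid_max a (sparse_family a) x)"
      unfolding layer_sum_def by (subst nn_integral_cmult[symmetric]) (auto intro: nn_integral_mono)
  qed
  also have "\<dots> \<le> (\<integral>\<^sup>+x. 4 * grid_max a (sparse_family a) x \<partial>lborel)"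
    by (intro nn_integral_mono layer_sum_le)
  also have "\<dots> = 4 * (\<integral>\<^sup>+x. grid_max a (sparse_family a) x \<partial>lborel)"
    using sparse_family_subset by (intro nn_integral_cmult borel_measurable_grid_max)
  finally show ?thesis .
qed

lemma strict_subcube_in_sparse_family_subset_level_set:
  assumes "Q \<in> good_cubes a k" "R \<in> sparse_family a" "R \<subset> Q"
  shows "R \<subseteq> level_set a (k + 1)"
proof -
  obtain j where R: "R \<in> stopping_cubes a j"
    using assms(2) by (auto simp: sparse_family_def good_cubes_def)
  have Q: "Q \<in> dyadic_grid" "four_pow k < a Q"
    using assms(1) by (auto simp: good_cubes_def stopping_cubes_def heavy_cubes_def)
  have "k + 1 \<le> j"
  proof (rule ccontr)
    assume "\<not> k + 1 \<le> j"
    then have "Q \<in> heavy_cubes a j"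
      using Q four_pow_mono[of j k] by (auto simp: heavy_cubes_def)
    with R assms(3) show False
      by (auto simp: stopping_cubes_def)
  qed
  then have "R \<in> heavy_cubes a (k + 1)"
    using R four_pow_mono[of "k + 1" j] by (auto simp: stopping_cubes_def heavy_cubes_def)
  then show ?thesis
    by (auto simp: level_set_eq_Union_heavy_cubes)
qed

lemma sparse_sparse_family: "sparse (sparse_family a)"
  unfolding sparse_def
proof (intro conjI ballI)
  show "sparse_family a \<subseteq> dyadic_grid"
    by (rule sparse_family_subset)
  fix Q assume "Q \<in> sparse_family a"
  then obtain k where Qk: "Q \<in> good_cubes a k"
    by (auto simp: sparse_family_def)
  then have Q: "Q \<in> dyadic_grid"
    using good_cubes_subset by blast
  define E where "E = level_set a (k + 1)"
  define U where "U = \<Union>{R \<in> sparse_family a. R \<subset> Q}"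
  have "U \<subseteq> E"
    using strict_subcube_in_sparse_family_subset_level_set[OF Qk] by (auto simp: U_def E_def)
  have "U \<in> sets lborel"
    unfolding U_def using sparse_family_subset by (intro sets_Union_dyadic_grid) auto
  have "measure lborel Q / 2 \<le> measure lborel Q - measure lborel (Q \<inter> E)"
    using Qk by (auto simp: good_cubes_def E_def)
  also have "\<dots> = measure lborel (Q - E)"
    using Q emeasure_dyadic_grid_finite[OF Q]
    by (subst measure_Diff[symmetric]) (auto simp: E_def Diff_Int)
  also have "\<dots> \<le> measure lborel (Q - U)"
    using Q \<open>U \<subseteq> E\<close> \<open>U \<in> sets lborel\<close> emeasure_dyadic_grid_finite[OF Q]
    by (intro measure_mono_fmeasurable) (auto simp: E_def fmeasurable_def
        intro: le_less_trans[OF emeasure_mono])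
  finally show "measure lborel Q / 2 \<le> measure lborel (Q - \<Union>{R \<in> sparse_family a. R \<subset> Q})"
    by (simp add: U_def)
qed

lemma grid_max_integral_le_sparse:
  assumes "(\<integral>\<^sup>+x. grid_max a dyadic_grid x \<partial>lborel) < \<infinity>"
  shows "\<exists>S. sparse S \<and> (\<integral>\<^sup>+x. grid_max a dyadic_grid x \<partial>lborel) \<le> 8 * (\<integral>\<^sup>+x. grid_max a S x \<partial>lborel)"
proof (intro exI conjI)
  show "sparse (sparse_family a)"
    by (rule sparse_sparse_family)
  have "(\<integral>\<^sup>+x. grid_max a dyadic_grid x \<partial>lborel) \<le> 3 * level_sum a"
    by (rule grid_max_integral_le_level_sum)
  also have "\<dots> \<le> 3 * (2 * good_sum a)"
    using level_sum_le_good_sum[OF assms] by (rule mult_left_mono) simp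
  also have "\<dots> = 2 * (3 * good_sum a)"
    by (simp add: mult.left_commute)
  also have "\<dots> \<le> 2 * (4 * (\<integral>\<^sup>+x. grid_max a (sparse_family a) x \<partial>lborel))"
    by (intro mult_left_mono good_sum_le) simp
  finally show "(\<integral>\<^sup>+x. grid_max a dyadic_grid x \<partial>lborel) \<le> 8 * (\<integral>\<^sup>+x. grid_max a (sparse_family a) x \<partial>lborel)"
    by (simp add: mult.assoc[symmetric])
qed

definition uncovered_part :: "(real^'n::finite) set set \<Rightarrow> (real^'n) set \<Rightarrow> (real^'n) set" where
  "uncovered_part S Q = Q - \<Union>{R \<in> S. R \<subset> Q}"

lemma uncovered_part_subset: "uncovered_part S Q \<subseteq> Q"
  by (auto simp: uncovered_part_def)

lemma sets_uncovered_part: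
  assumes "S \<subseteq> dyadic_grid" "Q \<in> dyadic_grid"
  shows "uncovered_part S Q \<in> sets borel"
proof -
  have "\<Union>{R \<in> S. R \<subset> Q} \<in> sets lborel"
    using assms(1) by (intro sets_Union_dyadic_grid) auto
  then show ?thesis
    using assms(2) unfolding uncovered_part_def by (intro sets.Diff) (auto intro: sets_dyadic_grid)
qed

lemma uncovered_part_unique:
  assumes "S \<subseteq> dyadic_grid" "Q \<in> S" "Q' \<in> S"
    and "x \<in> uncovered_part S Q" "x \<in> uncovered_part S Q'"
  shows "Q = Q'"
proof (rule ccontr)
  assume "Q \<noteq> Q'"
  have "x \<in> Q" "x \<in> Q'"
    using assms(4,5) uncovered_part_subset by blast+
  then have "Q \<subset> Q' \<or> Q' \<subset> Q"
    using dyadic_grid_nested assms(1-3) \<open>Q \<noteq> Q'\<close> by blast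
  with assms \<open>x \<in> Q\<close> \<open>x \<in> Q'\<close> show False
    by (auto simp: uncovered_part_def)
qed

lemma emeasure_le_twice_uncovered_part:
  assumes "sparse S" "Q \<in> S"
  shows "emeasure lborel Q \<le> 2 * emeasure lborel (uncovered_part S Q)"
proof -
  have "S \<subseteq> dyadic_grid" "Q \<in> dyadic_grid"
    using assms by (auto simp: sparse_def)
  moreover have "measure lborel Q \<le> 2 * measure lborel (uncovered_part S Q)"
    using assms by (auto simp: sparse_def uncovered_part_def)
  ultimately show ?thesis
    by (intro emeasure_le_twice_of_measure_le emeasure_dyadic_grid_finite)
       (auto simp: uncovered_part_subset sets_uncovered_part)
qed

lemma sum_uncovered_parts_le_grid_max:
  assumes "S \<subseteq> dyadic_grid"
  shows "(\<integral>\<^sup>+Q. a Q * indicator (uncovered_part S Q) x \<partial>count_space S) \<le> grid_max a S x"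
proof (cases "\<exists>Q0\<in>S. x \<in> uncovered_part S Q0")
  case True
  then obtain Q0 where Q0: "Q0 \<in> S" "x \<in> uncovered_part S Q0"
    by blast
  have "(\<integral>\<^sup>+Q. a Q * indicator (uncovered_part S Q) x \<partial>count_space S)
      = (\<Sum>Q\<in>{Q0}. a Q * indicator (uncovered_part S Q) x)"
  proof (rule nn_integral_count_space')
    fix Q assume "Q \<in> S" "Q \<notin> {Q0}"
    then have "x \<notin> uncovered_part S Q"
      using uncovered_part_unique[OF assms \<open>Q \<in> S\<close> Q0(1) _ Q0(2)] by blast
    then show "a Q * indicator (uncovered_part S Q) x = 0"
      by simp
  qed (use Q0 in auto)
  also have "\<dots> = a Q0"
    using Q0 by simp
  also have "\<dots> \<le> grid_max a S x"
    using Q0 uncovered_part_subset by (intro grid_max_ge) auto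
  finally show ?thesis .
next
  case False
  then have "(\<integral>\<^sup>+Q. a Q * indicator (uncovered_part S Q) x \<partial>count_space S) = (\<integral>\<^sup>+Q. 0 \<partial>count_space S)"
    by (intro nn_integral_cong) auto
  then show ?thesis by simp
qed

lemma sparse_sum_integral_le:
  assumes "sparse S"
  shows "(\<integral>\<^sup>+x. (\<integral>\<^sup>+Q. a Q * indicator Q x \<partial>count_space S) \<partial>lborel)
    \<le> 2 * (\<integral>\<^sup>+x. grid_max a S x \<partial>lborel)"
proof -
  have S: "S \<subseteq> dyadic_grid" "countable S"
    using assms countable_dyadic_grid by (auto simp: sparse_def intro: countable_subset)
  have "(\<integral>\<^sup>+x. (\<integral>\<^sup>+Q. a Q * indicator Q x \<partial>count_space S) \<partial>lborel)
      = (\<integral>\<^sup>+Q. a Q * emeasure lborel Q \<partial>count_space S)"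
    using S by (intro nn_integral_weighted_emeasure[symmetric]) (auto intro: sets_dyadic_grid)
  also have "\<dots> \<le> (\<integral>\<^sup>+Q. (2 * a Q) * emeasure lborel (uncovered_part S Q) \<partial>count_space S)"
  proof (rule nn_integral_mono)
    fix Q assume "Q \<in> space (count_space S)"
    then have "a Q * emeasure lborel Q \<le> a Q * (2 * emeasure lborel (uncovered_part S Q))"
      using emeasure_le_twice_uncovered_part[OF assms] by (intro mult_left_mono) auto
    then show "a Q * emeasure lborel Q \<le> (2 * a Q) * emeasure lborel (uncovered_part S Q)"
      by (simp add: mult_ac)
  qed
  also have "\<dots> = (\<integral>\<^sup>+x. (\<integral>\<^sup>+Q. (2 * a Q) * indicator (uncovered_part S Q) x \<partial>count_space S) \<partial>lborel)"
    using S by (intro nn_integral_weighted_emeasure) (auto intro: sets_uncovered_part)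
  also have "\<dots> \<le> (\<integral>\<^sup>+x. 2 * grid_max a S x \<partial>lborel)"
  proof (rule nn_integral_mono)
    fix x
    have "(\<integral>\<^sup>+Q. (2 * a Q) * indicator (uncovered_part S Q) x \<partial>count_space S)
        = 2 * (\<integral>\<^sup>+Q. a Q * indicator (uncovered_part S Q) x \<partial>count_space S)"
      by (subst nn_integral_cmult[symmetric]) (simp_all add: mult.assoc)
    also have "\<dots> \<le> 2 * grid_max a S x"
      using sum_uncovered_parts_le_grid_max[OF S(1)] by (rule mult_left_mono) simp
    finally show "(\<integral>\<^sup>+Q. (2 * a Q) * indicator (uncovered_part S Q) x \<partial>count_space S)
        \<le> 2 * grid_max a S x" .
  qed
  also have "\<dots> = 2 * (\<integral>\<^sup>+x. grid_max a S x \<partial>lborel)"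
    using S(1) by (intro nn_integral_cmult borel_measurable_grid_max)
  finally show ?thesis .
qed

lemma dyadic_max_eq_grid_max: "dyadic_max f x = grid_max (\<lambda>Q. ennreal \<bar>avg f Q\<bar>) dyadic_grid x"
proof (rule antisym)
  show "dyadic_max f x \<le> grid_max (\<lambda>Q. ennreal \<bar>avg f Q\<bar>) dyadic_grid x"
    unfolding dyadic_max_def by (rule SUP_least) (auto intro: grid_max_ge)
  show "grid_max (\<lambda>Q. ennreal \<bar>avg f Q\<bar>) dyadic_grid x \<le> dyadic_max f x"
    unfolding grid_max_def dyadic_max_def
    by (rule SUP_least) (auto simp: indicator_def intro: SUP_upper)
qed

lemma sparse_max_eq_grid_max: "sparse_max S f x = grid_max (\<lambda>Q. ennreal \<bar>avg f Q\<bar>) S x"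
  by (simp add: sparse_max_def grid_max_def)

lemma sparse_max_le_sparse_op: "sparse_max S f x \<le> sparse_op S f x"
  unfolding sparse_max_def sparse_op_def
proof (rule SUP_least)
  fix Q assume "Q \<in> S"
  then have "{Q} \<in> {F. finite F \<and> F \<subseteq> S}"
    by simp
  then have "(\<Sum>Q'\<in>{Q}. ennreal \<bar>avg f Q'\<bar> * indicator Q' x)
      \<le> (SUP F\<in>{F. finite F \<and> F \<subseteq> S}. \<Sum>Q\<in>F. ennreal \<bar>avg f Q\<bar> * indicator Q x)"
    by (rule SUP_upper)
  then show "ennreal \<bar>avg f Q\<bar> * indicator Q x
      \<le> (SUP F\<in>{F. finite F \<and> F \<subseteq> S}. \<Sum>Q\<in>F. ennreal \<bar>avg f Q\<bar> * indicator Q x)"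
    by (simp only: sum.insert[OF finite.emptyI] empty_iff not_False_eq_True sum.empty add_0_right)
qed

lemma sparse_op_le_nn_integral:
  "sparse_op S f x \<le> (\<integral>\<^sup>+Q. ennreal \<bar>avg f Q\<bar> * indicator Q x \<partial>count_space S)"
  unfolding sparse_op_def
proof (rule SUP_least)
  fix F assume F: "F \<in> {F. finite F \<and> F \<subseteq> S}"
  then have "(\<Sum>Q\<in>F. ennreal \<bar>avg f Q\<bar> * indicator Q x)
      = (\<integral>\<^sup>+Q. ennreal \<bar>avg f Q\<bar> * indicator Q x * indicator F Q \<partial>count_space S)"
    by (subst nn_integral_count_space'[where A = F]) auto
  also have "\<dots> \<le> (\<integral>\<^sup>+Q. ennreal \<bar>avg f Q\<bar> * indicator Q x \<partial>count_space S)"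
    by (intro nn_integral_mono) (auto simp: indicator_def)
  finally show "(\<Sum>Q\<in>F. ennreal \<bar>avg f Q\<bar> * indicator Q x)
      \<le> (\<integral>\<^sup>+Q. ennreal \<bar>avg f Q\<bar> * indicator Q x \<partial>count_space S)" .
qed

lemma H1_norm_le_sup_sparse_max:
  assumes "H1_norm f < \<infinity>"
  shows "H1_norm f \<le> 8 * sup_sparse_max f"
proof -
  obtain S where S: "sparse S"
    "H1_norm f \<le> 8 * (\<integral>\<^sup>+x. grid_max (\<lambda>Q. ennreal \<bar>avg f Q\<bar>) S x \<partial>lborel)"
    using grid_max_integral_le_sparse assms by (auto simp: H1_norm_def dyadic_max_eq_grid_max)
  have "(\<integral>\<^sup>+x. grid_max (\<lambda>Q. ennreal \<bar>avg f Q\<bar>) S x \<partial>lborel) \<le> sup_sparse_max f"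
    unfolding sup_sparse_max_def sparse_max_eq_grid_max using S(1) by (intro SUP_upper) simp
  then have "8 * (\<integral>\<^sup>+x. grid_max (\<lambda>Q. ennreal \<bar>avg f Q\<bar>) S x \<partial>lborel) \<le> 8 * sup_sparse_max f"
    by (rule mult_left_mono) simp
  with S(2) show ?thesis
    by (rule order_trans)
qed

lemma sup_sparse_max_le_H1_norm: "sup_sparse_max (f :: real^'n::finite \<Rightarrow> real) \<le> H1_norm f"
  unfolding sup_sparse_max_def H1_norm_def sparse_max_eq_grid_max dyadic_max_eq_grid_max
proof (rule SUP_least)
  fix S :: "(real^'n) set set" assume "S \<in> {S. sparse S}"
  then have "S \<subseteq> dyadic_grid"
    by (simp add: sparse_def)
  then show "(\<integral>\<^sup>+x. grid_max (\<lambda>Q. ennreal \<bar>avg f Q\<bar>) S x \<partial>lborel)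
      \<le> (\<integral>\<^sup>+x. grid_max (\<lambda>Q. ennreal \<bar>avg f Q\<bar>) dyadic_grid x \<partial>lborel)"
    by (intro nn_integral_mono grid_max_mono)
qed

lemma sup_sparse_max_le_sup_sparse_op: "sup_sparse_max f \<le> sup_sparse_op f"
  unfolding sup_sparse_max_def sup_sparse_op_def
  by (intro SUP_mono) (auto intro!: nn_integral_mono sparse_max_le_sparse_op)

lemma sup_sparse_op_le_sup_sparse_max:
  "sup_sparse_op (f :: real^'n::finite \<Rightarrow> real) \<le> 2 * sup_sparse_max f"
  unfolding sup_sparse_op_def
proof (rule SUP_least)
  fix S :: "(real^'n) set set" assume "S \<in> {S. sparse S}"
  then have "sparse S" by simp
  have "(\<integral>\<^sup>+x. sparse_op S f x \<partial>lborel)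
      \<le> (\<integral>\<^sup>+x. (\<integral>\<^sup>+Q. ennreal \<bar>avg f Q\<bar> * indicator Q x \<partial>count_space S) \<partial>lborel)"
    by (intro nn_integral_mono sparse_op_le_nn_integral)
  also have "\<dots> \<le> 2 * (\<integral>\<^sup>+x. sparse_max S f x \<partial>lborel)"
    unfolding sparse_max_eq_grid_max by (rule sparse_sum_integral_le[OF \<open>sparse S\<close>])
  also have "\<dots> \<le> 2 * sup_sparse_max f"
    unfolding sup_sparse_max_def using \<open>sparse S\<close> by (intro mult_left_mono SUP_upper) simp_all
  finally show "(\<integral>\<^sup>+x. sparse_op S f x \<partial>lborel) \<le> 2 * sup_sparse_max f" .
qed

theorem theoremB:
  "\<exists>C::real. C > 0 \<and>
     (\<forall>f :: real^'n::finite \<Rightarrow> real. loc_integrable f \<and> H1_norm f < \<infinity> \<longrightarrow>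
        H1_norm f \<le> ennreal C * sup_sparse_max f \<and>
        sup_sparse_max f \<le> ennreal C * H1_norm f \<and>
        sup_sparse_max f \<le> ennreal C * sup_sparse_op f \<and>
        sup_sparse_op f \<le> ennreal C * sup_sparse_max f)"
proof (intro exI[of _ 8] conjI allI impI)
  fix f :: "real^'n \<Rightarrow> real"
  assume "loc_integrable f \<and> H1_norm f < \<infinity>"
  then have "H1_norm f < \<infinity>" by simp
  have le8: "y \<le> 8 * y" "2 * y \<le> 8 * y" for y :: ennreal
    using mult_right_mono[of 1 8 y] mult_right_mono[of 2 8 y] by simp_all
  show "H1_norm f \<le> ennreal 8 * sup_sparse_max f"
    using H1_norm_le_sup_sparse_max[OF \<open>H1_norm f < \<infinity>\<close>] by simp
  show "sup_sparse_max f \<le> ennreal 8 * H1_norm f"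
    using order_trans[OF sup_sparse_max_le_H1_norm le8(1)] by simp
  show "sup_sparse_max f \<le> ennreal 8 * sup_sparse_op f"
    using order_trans[OF sup_sparse_max_le_sup_sparse_op le8(1)] by simp
  show "sup_sparse_op f \<le> ennreal 8 * sup_sparse_max f"
    using order_trans[OF sup_sparse_op_le_sup_sparse_max le8(2)] by simp
qed simp

end
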